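(* For every $0\le k\le n$ and every $\lambda\vdash n$, $$m(\lambda,\beta_{H_n^k})=\sum_{C\in\hat S_n}\chi_\lambda(C)\,(n-|\mathrm{supp}(C)|)_k .$$
   Context: Permutations are composed as functions, and $\pi\in S_n$ is identified with the permutation matrix whose $(i,j)$ entry is $1$ iff $i=\pi(j)$. For $A\in GL_n(\mathbb{Z}_2)$ let $\eta(A)$ (resp. $\theta(A)$) be the partition obtained by sorting the row sums (resp. column sums) of $A$, computed as integers, in weakly decreasing order. For $0\le k\le n$, $H_n^k=\{A\in GL_n(\mathbb{Z}_2)\mid \eta(A)=(n,n-1,\dots,n-k+1,1^{n-k}),\ \theta(A)=((k+1)^{n-k},k,k-1,\dots,1)\}$. $\beta_{H_n^k}$ is the complex permutation representation of $S_n$ on the space with basis $H_n^k$ given by $\pi\circ A=\pi A\pi^{-1}$. $\hat S_n$ is the set of conjugacy classes of $S_n$; $\chi_\lambda$ is the irreducible character indexed by $\lambda$ and $m(\lambda,\beta)$ the multiplicity of this irreducible in $\beta$; $\mathrm{supp}(C)$ is the set of points moved by an element of $C$ (its size depends only on $C$); $(m)_k=m(m-1)\cdots(m-k+1)$ is the falling factorial. *)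

theory Defs
  imports Complex_Main "HOL-Library.Z2" "HOL-Combinatorics.Permutations"
    "Jordan_Normal_Form.Matrix"
begin

text \<open>Index set {0..<n} is used in place of {1..n}; permutations of S_n are
  functions pi with pi permutes {..<n}.\<close>

definition perm_mat :: "nat \<Rightarrow> (nat \<Rightarrow> nat) \<Rightarrow> bit mat" where
  "perm_mat n p = mat n n (\<lambda>(i, j). if i = p j then 1 else 0)"

definition GL2 :: "nat \<Rightarrow> bit mat set" where
  "GL2 n = {A \<in> carrier_mat n n. invertible_mat A}"

definition row_sum :: "bit mat \<Rightarrow> nat \<Rightarrow> nat" where
  "row_sum A i = (\<Sum>j<dim_col A. if A $$ (i, j) = 1 then 1 else 0)"

definition col_sum :: "bit mat \<Rightarrow> nat \<Rightarrow> nat" where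
  "col_sum A j = (\<Sum>i<dim_row A. if A $$ (i, j) = 1 then 1 else 0)"

definition eta :: "bit mat \<Rightarrow> nat list" where
  "eta A = rev (sort (map (row_sum A) [0..<dim_row A]))"

definition theta :: "bit mat \<Rightarrow> nat list" where
  "theta A = rev (sort (map (col_sum A) [0..<dim_col A]))"

definition H :: "nat \<Rightarrow> nat \<Rightarrow> bit mat set" where
  "H n k = {A \<in> GL2 n.
     eta A = map (\<lambda>i. n - i) [0..<k] @ replicate (n - k) 1 \<and>
     theta A = replicate (n - k) (k + 1) @ map (\<lambda>i. k - i) [0..<k]}"

definition conj_act :: "nat \<Rightarrow> (nat \<Rightarrow> nat) \<Rightarrow> bit mat \<Rightarrow> bit mat" where
  "conj_act n p A = perm_mat n p * A * perm_mat n (inv_into UNIV p)"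

text \<open>Character of the permutation representation beta_X: number of fixed basis elements.\<close>
definition perm_char :: "nat \<Rightarrow> bit mat set \<Rightarrow> (nat \<Rightarrow> nat) \<Rightarrow> complex" where
  "perm_char n X p = of_nat (card {A \<in> X. conj_act n p A = A})"

definition is_partition :: "nat list \<Rightarrow> nat \<Rightarrow> bool" where
  "is_partition lam n \<longleftrightarrow> sorted (rev lam) \<and> (\<forall>x\<in>set lam. 0 < x) \<and> sum_list lam = n"

text \<open>Permutation character of the Young subgroup S_alpha (alpha a composition, possibly with
  negative parts, in which case it is 0): number of ordered set partitions of {..<n}
  into pi-invariant blocks of sizes alpha.\<close>
definition young_char :: "nat \<Rightarrow> int list \<Rightarrow> (nat \<Rightarrow> nat) \<Rightarrow> complex" where
  "young_char n alpha p =
     (if \<exists>a\<in>set alpha. a < 0 then 0 else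
      of_nat (card {f \<in> {..<n} \<rightarrow>\<^sub>E {..<length alpha}.
        (\<forall>i<n. f (p i) = f i) \<and>
        (\<forall>t<length alpha. int (card {i\<in>{..<n}. f i = t}) = alpha ! t)}))"

text \<open>Irreducible character chi_lambda via the determinantal (Jacobi-Trudi / Frobenius) formula
  chi_lambda = det (phi^{(lambda_i - i + j)}).\<close>
definition irr_char :: "nat \<Rightarrow> nat list \<Rightarrow> (nat \<Rightarrow> nat) \<Rightarrow> complex" where
  "irr_char n lam p =
     (\<Sum>s | s permutes {..<length lam}.
        of_int (sign s) *
        young_char n (map (\<lambda>i. int (lam ! i) - int i + int (s i)) [0..<length lam]) p)"

definition multiplicity :: "nat \<Rightarrow> nat list \<Rightarrow> ((nat \<Rightarrow> nat) \<Rightarrow> complex) \<Rightarrow> complex" where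
  "multiplicity n lam psi =
     (\<Sum>p | p permutes {..<n}. psi p * cnj (irr_char n lam p)) / of_nat (fact n)"

definition conj_classes :: "nat \<Rightarrow> (nat \<Rightarrow> nat) set set" where
  "conj_classes n = (\<lambda>p. {s \<circ> p \<circ> inv_into UNIV s | s. s permutes {..<n}}) ` {p. p permutes {..<n}}"

definition rep :: "(nat \<Rightarrow> nat) set \<Rightarrow> (nat \<Rightarrow> nat)" where
  "rep C = (SOME p. p \<in> C)"

definition supp_size :: "(nat \<Rightarrow> nat) set \<Rightarrow> nat" where
  "supp_size C = card {i. rep C i \<noteq> i}"

definition falling :: "nat \<Rightarrow> nat \<Rightarrow> nat" where
  "falling m k = (\<Prod>i<k. m - i)"

end

theory Submission
  imports Defs "Jordan_Normal_Form.Determinant"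
begin

(*
  A matrix of H n k is determined by a permutation psi of {..<n} and a list r of k distinct
  indices: row r ! a, of sum n - a, is full except in the columns psi (r ! b) with a + b >= k,
  and every other row i has its single 1 in column psi i. Invertibility makes the rows of sum 1
  pairwise distinct, and the column sums then force this staircase shape; conversely each
  staircase matrix is invertible with the prescribed row and column sums.
  Conjugation by p acts on the parameters as (psi, r) |-> (p o psi o p^-1, map p r), so p fixes
  |C(p)| * (fix p)_k matrices, C(p) the centraliser. The character chi_lambda is a real class
  function, and |class(p)| * |C(p)| = n! turns the average over S_n into the sum over classes.
*)

(* HOL-Algebra, imported through Determinant, would read inv as a group inverse. *)
unbundle no m_inv_syntax

(* Keep products and sums of bits as ring operations, which the sum lemmas below rely on. *)
declare mult_bit_eq_and [simp del] add_bit_eq_xor [simp del]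

lemma bij_betw_Collect:
  assumes "bij_betw g A A" and "\<And>x. x \<in> A \<Longrightarrow> P (g x) \<longleftrightarrow> Q x"
  shows "bij_betw g {x \<in> A. Q x} {x \<in> A. P x}"
proof (rule bij_betw_subset)
  show "g ` {x \<in> A. Q x} = {x \<in> A. P x}"
  proof (intro equalityI subsetI)
    fix y assume "y \<in> {x \<in> A. P x}"
    moreover obtain x where "x \<in> A" "y = g x"
      using \<open>y \<in> {x \<in> A. P x}\<close> assms(1) unfolding bij_betw_def by blast
    ultimately show "y \<in> g ` {x \<in> A. Q x}" using assms(2) by blast
  qed (use assms bij_betwE in blast)
qed (use assms(1) in auto)

lemma card_Collect_eq_if_bij_betw:
  "bij_betw g A A \<Longrightarrow> (\<And>x. x \<in> A \<Longrightarrow> P (g x) \<longleftrightarrow> Q x) \<Longrightarrow>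
    card {x \<in> A. Q x} = card {x \<in> A. P x}"
  by (rule bij_betw_same_card) (rule bij_betw_Collect)

lemma card_fixed_points_eq_if_equivariant:
  assumes inj: "inj_on f X" and img: "f ` X = Y"
    and closed: "\<And>x. x \<in> X \<Longrightarrow> h x \<in> X" and equiv: "\<And>x. x \<in> X \<Longrightarrow> g (f x) = f (h x)"
  shows "card {y \<in> Y. g y = y} = card {x \<in> X. h x = x}"
proof -
  have "{y \<in> Y. g y = y} = f ` {x \<in> X. h x = x}"
  proof (intro equalityI subsetI)
    fix y assume "y \<in> {y \<in> Y. g y = y}"
    then obtain x where x: "x \<in> X" "y = f x" "f (h x) = f x" using img equiv by auto
    then have "h x = x" using inj closed by (auto dest: inj_onD)
    then show "y \<in> f ` {x \<in> X. h x = x}" using x by blast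
  qed (use img equiv in auto)
  moreover have "inj_on f {x \<in> X. h x = x}" using inj by (rule inj_on_subset) auto
  ultimately show ?thesis by (simp add: card_image)
qed

lemma prod_atLeastAtMost_falling: "k \<le> m \<Longrightarrow> \<Prod>{m - k + 1..m} = falling m k"
proof (induction k)
  case (Suc k)
  have "{m - Suc k + 1..m} = insert (m - k) {m - k + 1..m}" using Suc.prems by auto
  then have "\<Prod>{m - Suc k + 1..m} = (m - k) * \<Prod>{m - k + 1..m}" by simp
  also have "\<dots> = falling m (Suc k)" using Suc by (simp add: falling_def)
  finally show ?case .
qed (simp add: falling_def)

lemma card_distinct_lists_falling:
  assumes S: "finite S"
  shows "card {xs. length xs = k \<and> distinct xs \<and> set xs \<subseteq> S} = falling (card S) k"
proof (cases "k \<le> card S")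
  case True
  then show ?thesis using card_lists_distinct_length_eq[OF S True] prod_atLeastAtMost_falling by simp
next
  case False
  have "{xs. length xs = k \<and> distinct xs \<and> set xs \<subseteq> S} = {}"
  proof (rule ccontr)
    assume "{xs. length xs = k \<and> distinct xs \<and> set xs \<subseteq> S} \<noteq> {}"
    then obtain xs where xs: "length xs = k" "distinct xs" "set xs \<subseteq> S" by auto
    then have "k \<le> card S" using card_mono[OF S xs(3)] by (simp add: distinct_card)
    then show False using False by simp
  qed
  moreover have "falling (card S) k = 0"
    unfolding falling_def using False by (intro prod_zero) (auto intro: bexI[of _ "card S"])
  ultimately show ?thesis by (simp only: card.empty)
qed

lemma mset_map_upt: "mset (map f [0..<n]) = image_mset f (mset_set {..<n})"
  by (simp add: atLeast0LessThan)

lemma card_eq_count_mset_map: "card {i \<in> {..<n}. f i = v} = count (mset (map f [0..<n])) v"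
  by (simp add: mset_map_upt count_image_mset Int_def conj_commute vimage_def)

lemma rev_sort_eq: "mset xs = mset ys \<Longrightarrow> sorted (rev ys) \<Longrightarrow> rev (sort xs) = (ys :: nat list)"
  by (metis mset_rev properties_for_sort rev_rev_ident)

lemma singleton_the_elem_if_card_eq_1: "card S = 1 \<Longrightarrow> S = {the_elem S}"
  by (metis is_singleton_altdef is_singleton_the_elem)

lemma prefix_sums_zero:
  fixes w :: "nat \<Rightarrow> 'a :: comm_monoid_add"
  assumes "\<And>m. m \<le> k \<Longrightarrow> (\<Sum>b<m. w b) = 0" and "b < k"
  shows "w b = 0"
  using assms(1)[of b] assms(1)[of "Suc b"] assms(2) by simp

lemma staircase_pattern_row:
  fixes B :: "nat \<Rightarrow> nat \<Rightarrow> bool"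
  assumes rows: "\<And>a. a < k \<Longrightarrow> card {b. b < k \<and> B a b} = k - a"
    and cols: "\<And>b. b < k \<Longrightarrow> card {a. a < k \<and> B a b} = k - b"
  shows "a < k \<Longrightarrow> {b. b < k \<and> B a b} = {b. b < k - a}"
proof (induction a rule: less_induct)
  case (less a)
  \<comment> \<open>The rows above \<open>a\<close> already fill the \<open>k - b\<close> places of column \<open>b\<close> when \<open>b \<ge> k - a\<close>.\<close>
  have not_B: "\<not> B a b" if b: "b < k" "k - a \<le> b" for b
  proof -
    have "{a'. a' < k - b} \<subseteq> {a'. a' < k \<and> B a' b}"
    proof
      fix a' assume "a' \<in> {a'. a' < k - b}"
      then have a': "a' < a" "a' < k" "b < k - a'" using b by auto
      then have "{c. c < k \<and> B a' c} = {c. c < k - a'}" using less.IH[OF a'(1)] by blast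
      then show "a' \<in> {a'. a' < k \<and> B a' b}" using a' b(1) by blast
    qed
    moreover have "card {a'. a' < k - b} = card {a'. a' < k \<and> B a' b}" using cols[OF b(1)] by simp
    ultimately have "{a'. a' < k - b} = {a'. a' < k \<and> B a' b}" by (intro card_subset_eq) auto
    moreover have "a \<notin> {a'. a' < k - b}" using b by simp
    ultimately show ?thesis using less.prems by blast
  qed
  have "{b. b < k \<and> B a b} \<subseteq> {b. b < k - a}"
  proof
    fix b assume "b \<in> {b. b < k \<and> B a b}"
    then have "b < k" "B a b" by auto
    then show "b \<in> {b. b < k - a}" using not_B by (metis mem_Collect_eq not_le)
  qed
  moreover have "card {b. b < k \<and> B a b} = card {b. b < k - a}" using rows[OF less.prems] by simp
  ultimately show ?case by (intro card_subset_eq) auto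
qed

lemma staircase_pattern_unique:
  fixes B :: "nat \<Rightarrow> nat \<Rightarrow> bool"
  assumes rows: "\<And>a. a < k \<Longrightarrow> card {b. b < k \<and> B a b} = k - a"
    and cols: "\<And>b. b < k \<Longrightarrow> card {a. a < k \<and> B a b} = k - b"
    and a: "a < k" and b: "b < k"
  shows "B a b \<longleftrightarrow> a + b < k"
proof -
  have "{b. b < k \<and> B a b} = {b. b < k - a}" by (rule staircase_pattern_row[OF rows cols a])
  then have "B a b \<longleftrightarrow> b \<in> {b. b < k - a}" using b by blast
  then show ?thesis by auto
qed

section \<open>Conjugacy classes and centralisers in the symmetric group\<close>

definition conj_class :: "nat \<Rightarrow> (nat \<Rightarrow> nat) \<Rightarrow> (nat \<Rightarrow> nat) set" where
  "conj_class n p = {s \<circ> p \<circ> inv s | s. s permutes {..<n}}"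

definition centraliser :: "nat \<Rightarrow> (nat \<Rightarrow> nat) \<Rightarrow> (nat \<Rightarrow> nat) set" where
  "centraliser n p = {u. u permutes {..<n} \<and> u \<circ> p = p \<circ> u}"

definition fixed_points :: "nat \<Rightarrow> (nat \<Rightarrow> nat) \<Rightarrow> nat set" where
  "fixed_points n p = {i. i < n \<and> p i = i}"

definition class_function :: "nat \<Rightarrow> ((nat \<Rightarrow> nat) \<Rightarrow> 'a) \<Rightarrow> bool" where
  "class_function n f \<longleftrightarrow>
     (\<forall>s p. s permutes {..<n} \<longrightarrow> p permutes {..<n} \<longrightarrow> f (s \<circ> p \<circ> inv s) = f p)"

lemma permutes_less_iff: "p permutes {..<n} \<Longrightarrow> p i < n \<longleftrightarrow> i < n"
  by (metis lessThan_iff permutes_in_image)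

lemma conj_permutes: "s permutes S \<Longrightarrow> p permutes S \<Longrightarrow> s \<circ> p \<circ> inv s permutes S"
  by (intro permutes_compose permutes_inv)

lemma conj_conj:
  assumes "s permutes S" "t permutes S"
  shows "t \<circ> (s \<circ> p \<circ> inv s) \<circ> inv t = (t \<circ> s) \<circ> p \<circ> inv (t \<circ> s)"
  using assms by (simp add: o_inv_distrib permutes_bij o_assoc)

lemma conj_classes_eq: "conj_classes n = conj_class n ` {p. p permutes {..<n}}"
  unfolding conj_classes_def conj_class_def ..

lemma conj_class_self: "p \<in> conj_class n p"
  unfolding conj_class_def by (auto intro!: exI[of _ id] permutes_id)

lemma conj_class_subset: "p permutes {..<n} \<Longrightarrow> conj_class n p \<subseteq> {p. p permutes {..<n}}"
  by (auto simp: conj_class_def intro: conj_permutes)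

lemma finite_conj_class: "p permutes {..<n} \<Longrightarrow> finite (conj_class n p)"
  using conj_class_subset finite_permutations[of "{..<n}"] finite_subset by blast

lemma conj_class_conj:
  assumes s: "s permutes {..<n}"
  shows "conj_class n (s \<circ> p \<circ> inv s) = conj_class n p"
proof (intro equalityI subsetI)
  fix q assume "q \<in> conj_class n (s \<circ> p \<circ> inv s)"
  then obtain t where t: "t permutes {..<n}" and q: "q = t \<circ> (s \<circ> p \<circ> inv s) \<circ> inv t"
    unfolding conj_class_def by blast
  have "q = (t \<circ> s) \<circ> p \<circ> inv (t \<circ> s)" unfolding q using s t by (rule conj_conj)
  then show "q \<in> conj_class n p"
    unfolding conj_class_def using permutes_compose[OF s t] by blast
next
  fix q assume "q \<in> conj_class n p"
  then obtain t where t: "t permutes {..<n}" and q: "q = t \<circ> p \<circ> inv t"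
    unfolding conj_class_def by blast
  have ts: "t \<circ> inv s permutes {..<n}" using permutes_inv[OF s] t by (rule permutes_compose)
  have "(t \<circ> inv s) \<circ> (s \<circ> p \<circ> inv s) \<circ> inv (t \<circ> inv s)
      = (t \<circ> inv s \<circ> s) \<circ> p \<circ> inv (t \<circ> inv s \<circ> s)"
    using s ts by (rule conj_conj)
  also have "t \<circ> inv s \<circ> s = t" using permutes_inv_o(2)[OF s] by (simp add: o_assoc[symmetric])
  finally have "q = (t \<circ> inv s) \<circ> (s \<circ> p \<circ> inv s) \<circ> inv (t \<circ> inv s)" unfolding q ..
  then show "q \<in> conj_class n (s \<circ> p \<circ> inv s)"
    unfolding conj_class_def using ts by blast
qed

lemma conj_class_eq_if_mem:
  assumes "q \<in> conj_class n p"
  shows "conj_class n q = conj_class n p"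
proof -
  obtain s where "s permutes {..<n}" and "q = s \<circ> p \<circ> inv s"
    using assms unfolding conj_class_def by blast
  then show ?thesis by (simp add: conj_class_conj)
qed

lemma conj_eq_iff_centraliser:
  assumes s: "s permutes {..<n}" and t: "t permutes {..<n}"
  shows "s \<circ> p \<circ> inv s = t \<circ> p \<circ> inv t \<longleftrightarrow> inv t \<circ> s \<in> centraliser n p"
proof -
  have "s \<circ> p \<circ> inv s = t \<circ> p \<circ> inv t \<longleftrightarrow> (\<forall>y. s (p y) = t (p (inv t (s y))))"
    unfolding fun_eq_iff by (metis comp_apply permutes_inverses[OF s])
  also have "\<dots> \<longleftrightarrow> (\<forall>y. inv t (s (p y)) = p (inv t (s y)))"
    by (metis permutes_inverses[OF t])
  also have "\<dots> \<longleftrightarrow> (inv t \<circ> s) \<circ> p = p \<circ> (inv t \<circ> s)"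
    by (simp add: fun_eq_iff)
  finally show ?thesis
    unfolding centraliser_def using permutes_compose[OF s permutes_inv[OF t]] by blast
qed

lemma conj_eq_self_iff:
  assumes p: "p permutes S"
  shows "p \<circ> psi \<circ> inv p = psi \<longleftrightarrow> p \<circ> psi = psi \<circ> p"
  unfolding fun_eq_iff comp_apply by (metis permutes_inverses[OF p])

theorem card_conj_class_mult_card_centraliser:
  assumes p: "p permutes {..<n}"
  shows "card (conj_class n p) * card (centraliser n p) = fact n"
proof -
  let ?conj = "\<lambda>s. s \<circ> p \<circ> inv s"
  let ?S = "{s. s permutes {..<n}}"
  have fiber: "{s \<in> ?S. ?conj s = ?conj t} = (\<lambda>u. t \<circ> u) ` centraliser n p" if t: "t permutes {..<n}" for t
  proof (intro equalityI subsetI)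
    fix s assume "s \<in> {s \<in> ?S. ?conj s = ?conj t}"
    then have "inv t \<circ> s \<in> centraliser n p" using conj_eq_iff_centraliser[OF _ t] by blast
    moreover have "s = t \<circ> (inv t \<circ> s)" by (simp add: fun_eq_iff permutes_inverses[OF t])
    ultimately show "s \<in> (\<lambda>u. t \<circ> u) ` centraliser n p" by blast
  next
    fix s assume "s \<in> (\<lambda>u. t \<circ> u) ` centraliser n p"
    then obtain u where u: "u \<in> centraliser n p" and su: "s = t \<circ> u" by blast
    have s: "s permutes {..<n}" using u t unfolding su centraliser_def by (blast intro: permutes_compose)
    have "inv t \<circ> s = u" unfolding su by (simp add: fun_eq_iff permutes_inverses[OF t])
    then show "s \<in> {s \<in> ?S. ?conj s = ?conj t}" using conj_eq_iff_centraliser[OF s t] u s by simp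
  qed
  have inj: "inj_on (\<lambda>u. t \<circ> u) X" if "t permutes {..<n}" for t and X :: "(nat \<Rightarrow> nat) set"
    using permutes_inj[OF that] by (auto simp: inj_on_def fun_eq_iff dest: injD)
  have "fact n = card ?S" by (simp add: card_permutations)
  also have "\<dots> = (\<Sum>q\<in>?conj ` ?S. card {s \<in> ?S. ?conj s = q})"
    unfolding card_eq_sum by (rule sum.image_gen) (simp add: finite_permutations)
  also have "?conj ` ?S = conj_class n p" unfolding conj_class_def by blast
  also have "(\<Sum>q\<in>conj_class n p. card {s \<in> ?S. ?conj s = q}) = (\<Sum>q\<in>conj_class n p. card (centraliser n p))"
  proof (rule sum.cong[OF refl])
    fix q assume "q \<in> conj_class n p"
    then obtain t where t: "t permutes {..<n}" and q: "q = ?conj t" unfolding conj_class_def by blast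
    show "card {s \<in> ?S. ?conj s = q} = card (centraliser n p)"
      unfolding q fiber[OF t] by (rule card_image[OF inj[OF t]])
  qed
  finally show ?thesis by simp
qed

lemma class_function_card_centraliser: "class_function n (\<lambda>p. card (centraliser n p))"
  unfolding class_function_def
proof (intro allI impI)
  fix s p assume s: "s permutes {..<n}" and p: "p permutes {..<n}"
  have "card (conj_class n p) * card (centraliser n (s \<circ> p \<circ> inv s)) = card (conj_class n p) * card (centraliser n p)"
    using card_conj_class_mult_card_centraliser[OF conj_permutes[OF s p]]
      card_conj_class_mult_card_centraliser[OF p] by (simp add: conj_class_conj[OF s])
  moreover have "card (conj_class n p) \<noteq> 0"
    using finite_conj_class[OF p] conj_class_self by (metis card_0_eq empty_iff)
  ultimately show "card (centraliser n (s \<circ> p \<circ> inv s)) = card (centraliser n p)" by simp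
qed

lemma class_function_card_fixed_points: "class_function n (\<lambda>p. card (fixed_points n p))"
  unfolding class_function_def
proof (intro allI impI)
  fix s p assume s: "s permutes {..<n}" and p: "p permutes {..<n}"
  have "bij_betw s (fixed_points n p) (fixed_points n (s \<circ> p \<circ> inv s))"
    by (rule bij_betw_byWitness[where f' = "inv s"])
      (auto simp: fixed_points_def permutes_inverses[OF s] permutes_less_iff[OF s]
        permutes_less_iff[OF permutes_inv[OF s]] intro!: image_eqI dest: arg_cong[of _ _ "inv s"])
  then show "card (fixed_points n (s \<circ> p \<circ> inv s)) = card (fixed_points n p)"
    by (simp add: bij_betw_same_card)
qed

lemma bij_betw_restrict_comp_permutes:
  assumes s: "s permutes {..<n}"
  shows "bij_betw (\<lambda>f. restrict (f \<circ> s) {..<n}) ({..<n} \<rightarrow>\<^sub>E B) ({..<n} \<rightarrow>\<^sub>E B)"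
proof -
  have si: "inv s permutes {..<n}" using s by (rule permutes_inv)
  note less_iff [simp] = permutes_less_iff[OF s] permutes_less_iff[OF si]
  show ?thesis
  proof (rule bij_betw_byWitness[where f' = "\<lambda>f. restrict (f \<circ> inv s) {..<n}"])
    show "\<forall>f\<in>{..<n} \<rightarrow>\<^sub>E B. restrict (restrict (f \<circ> s) {..<n} \<circ> inv s) {..<n} = f"
      by (intro ballI extensionalityI[where A = "{..<n}"]) (auto simp: permutes_inverses[OF s] PiE_iff)
    show "\<forall>f\<in>{..<n} \<rightarrow>\<^sub>E B. restrict (restrict (f \<circ> inv s) {..<n} \<circ> s) {..<n} = f"
      by (intro ballI extensionalityI[where A = "{..<n}"]) (auto simp: permutes_inverses[OF s] PiE_iff)
  qed (auto simp: PiE_iff)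
qed

lemma card_level_set_comp_permutes:
  assumes s: "s permutes {..<n}"
  shows "card {i \<in> {..<n}. f (s i) = t} = card {i \<in> {..<n}. f i = t}"
proof -
  have "bij_betw s {..<n} {..<n}" using s by (rule permutes_imp_bij)
  then show ?thesis by (rule card_Collect_eq_if_bij_betw[where P = "\<lambda>i. f i = t"]) simp
qed

lemma class_function_young_char: "class_function n (young_char n alpha)"
  unfolding class_function_def
proof (intro allI impI)
  fix s p assume s: "s permutes {..<n}" and p: "p permutes {..<n}"
  let ?g = "\<lambda>f. restrict (f \<circ> s) {..<n}"
  let ?Young = "\<lambda>p f. (\<forall>i<n. f (p i) = f i) \<and>
      (\<forall>t<length alpha. int (card {i \<in> {..<n}. f i = t}) = alpha ! t)"
  have "?Young p (?g f) \<longleftrightarrow> ?Young (s \<circ> p \<circ> inv s) f" for f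
  proof -
    have "(\<forall>i<n. f (s (p i)) = f (s i)) \<longleftrightarrow> (\<forall>i<n. f (s (p (inv s i))) = f i)"
      using permutes_less_iff[OF s] permutes_less_iff[OF permutes_inv[OF s]]
      by (metis permutes_inverses[OF s])
    moreover have "{i \<in> {..<n}. ?g f i = t} = {i \<in> {..<n}. f (s i) = t}" for t by auto
    ultimately show ?thesis
      using permutes_less_iff[OF p] card_level_set_comp_permutes[OF s, of f] by simp
  qed
  then have "card {f \<in> {..<n} \<rightarrow>\<^sub>E {..<length alpha}. ?Young (s \<circ> p \<circ> inv s) f}
      = card {f \<in> {..<n} \<rightarrow>\<^sub>E {..<length alpha}. ?Young p f}"
    by (intro card_Collect_eq_if_bij_betw[OF bij_betw_restrict_comp_permutes[OF s]])
  then show "young_char n alpha (s \<circ> p \<circ> inv s) = young_char n alpha p"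
    unfolding young_char_def by simp
qed

lemma class_function_irr_char: "class_function n (irr_char n lam)"
  using class_function_young_char unfolding class_function_def irr_char_def by simp

lemma cnj_young_char: "cnj (young_char n alpha p) = young_char n alpha p"
  unfolding young_char_def by simp

lemma cnj_irr_char: "cnj (irr_char n lam p) = irr_char n lam p"
  unfolding irr_char_def by (simp add: cnj_young_char)

lemma rep_mem_conj_classes:
  assumes "C \<in> conj_classes n"
  shows "rep C permutes {..<n}" and "conj_class n (rep C) = C"
proof -
  obtain q where q: "q permutes {..<n}" and C: "C = conj_class n q"
    using assms unfolding conj_classes_eq by auto
  have rep: "rep C \<in> C" unfolding rep_def C by (rule someI[of "\<lambda>p. p \<in> conj_class n q", OF conj_class_self])
  show "rep C permutes {..<n}" using conj_class_subset[OF q] rep C by auto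
  show "conj_class n (rep C) = C" using conj_class_eq_if_mem rep C by simp
qed

lemma card_fixed_points_rep:
  assumes "C \<in> conj_classes n"
  shows "card (fixed_points n (rep C)) = n - supp_size C"
proof -
  have "{i. rep C i \<noteq> i} \<subseteq> {..<n}"
    using rep_mem_conj_classes(1)[OF assms] permutes_not_in by fastforce
  moreover have "fixed_points n (rep C) = {..<n} - {i. rep C i \<noteq> i}"
    unfolding fixed_points_def by auto
  ultimately show ?thesis unfolding supp_size_def by (simp add: card_Diff_subset finite_subset)
qed

lemma class_function_eq_rep:
  assumes f: "class_function n f" and C: "C \<in> conj_classes n" and p: "p \<in> C"
  shows "f p = f (rep C)"
proof -
  have "p \<in> conj_class n (rep C)" using p rep_mem_conj_classes(2)[OF C] by simp
  then obtain s where "s permutes {..<n}" and "p = s \<circ> rep C \<circ> inv s"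
    unfolding conj_class_def by blast
  then show ?thesis using f rep_mem_conj_classes(1)[OF C] unfolding class_function_def by simp
qed

lemma conj_class_fibre:
  assumes C: "C \<in> conj_classes n"
  shows "{p \<in> {p. p permutes {..<n}}. conj_class n p = C} = C"
proof (intro equalityI subsetI)
  fix p assume "p \<in> {p \<in> {p. p permutes {..<n}}. conj_class n p = C}"
  then show "p \<in> C" using conj_class_self[of p n] by simp
next
  fix p assume p: "p \<in> C"
  note r = rep_mem_conj_classes[OF C]
  have "conj_class n p = C" using p conj_class_eq_if_mem[of p n "rep C"] r(2) by simp
  moreover have "p permutes {..<n}" using p conj_class_subset[OF r(1)] r(2) by blast
  ultimately show "p \<in> {p \<in> {p. p permutes {..<n}}. conj_class n p = C}" by simp
qed

theorem sum_permutations_centraliser_weighted: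
  fixes f :: "(nat \<Rightarrow> nat) \<Rightarrow> 'a :: comm_semiring_1"
  assumes f: "class_function n f"
  shows "(\<Sum>p | p permutes {..<n}. of_nat (card (centraliser n p)) * f p)
       = of_nat (fact n) * (\<Sum>C\<in>conj_classes n. f (rep C))"
proof -
  let ?S = "{p. p permutes {..<n}}"
  let ?g = "\<lambda>p. of_nat (card (centraliser n p)) * f p :: 'a"
  have class_sum: "(\<Sum>p\<in>{p \<in> ?S. conj_class n p = C}. ?g p) = of_nat (fact n) * f (rep C)"
    if C: "C \<in> conj_classes n" for C
  proof -
    note r = rep_mem_conj_classes[OF C]
    have "?g p = ?g (rep C)" if "p \<in> C" for p
      using class_function_eq_rep[OF class_function_card_centraliser C that]
        class_function_eq_rep[OF f C that] by simp
    then have "(\<Sum>p\<in>{p \<in> ?S. conj_class n p = C}. ?g p) = (\<Sum>p\<in>C. ?g (rep C))"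
      unfolding conj_class_fibre[OF C] by (rule sum.cong[OF refl])
    also have "\<dots> = of_nat (card C * card (centraliser n (rep C))) * f (rep C)"
      by (simp add: mult.assoc)
    also have "card C * card (centraliser n (rep C)) = fact n"
      using card_conj_class_mult_card_centraliser[OF r(1)] r(2) by simp
    finally show ?thesis .
  qed
  have "(\<Sum>p\<in>?S. ?g p) = (\<Sum>C\<in>conj_class n ` ?S. \<Sum>p\<in>{p \<in> ?S. conj_class n p = C}. ?g p)"
    by (rule sum.image_gen) (simp add: finite_permutations)
  also have "\<dots> = (\<Sum>C\<in>conj_classes n. of_nat (fact n) * f (rep C))"
    unfolding conj_classes_eq[symmetric] by (rule sum.cong[OF refl class_sum])
  also have "\<dots> = of_nat (fact n) * (\<Sum>C\<in>conj_classes n. f (rep C))"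
    by (rule sum_distrib_left[symmetric])
  finally show ?thesis .
qed

lemma perm_mat_mult:
  assumes p: "p permutes {..<n}" and A: "A \<in> carrier_mat n m"
  shows "perm_mat n p * A = mat n m (\<lambda>(i, j). A $$ (inv p i, j))"
proof (rule eq_matI)
  fix i j assume "i < dim_row (mat n m (\<lambda>(i, j). A $$ (inv p i, j)))"
    and "j < dim_col (mat n m (\<lambda>(i, j). A $$ (inv p i, j)))"
  then have i: "i < n" and j: "j < m" by auto
  have "i = p l \<longleftrightarrow> l = inv p i" for l by (metis permutes_inverses[OF p])
  then have "(perm_mat n p * A) $$ (i, j) = (\<Sum>l\<in>{0..<n}. of_bool (l = inv p i) * A $$ (l, j))"
    using i j A by (simp add: perm_mat_def scalar_prod_def of_bool_def)
  also have "\<dots> = A $$ (inv p i, j)" using permutes_less_iff[OF permutes_inv[OF p]] i by simp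
  finally show "(perm_mat n p * A) $$ (i, j) = mat n m (\<lambda>(i, j). A $$ (inv p i, j)) $$ (i, j)"
    using i j by simp
qed (use A in \<open>auto simp: perm_mat_def\<close>)

lemma mult_perm_mat:
  assumes p: "p permutes {..<n}" and A: "A \<in> carrier_mat m n"
  shows "A * perm_mat n p = mat m n (\<lambda>(i, j). A $$ (i, p j))"
proof (rule eq_matI)
  fix i j assume "i < dim_row (mat m n (\<lambda>(i, j). A $$ (i, p j)))"
    and "j < dim_col (mat m n (\<lambda>(i, j). A $$ (i, p j)))"
  then have i: "i < m" and j: "j < n" by auto
  have "(A * perm_mat n p) $$ (i, j) = (\<Sum>l\<in>{0..<n}. A $$ (i, l) * of_bool (l = p j))"
    using i j A by (simp add: perm_mat_def scalar_prod_def of_bool_def eq_commute[of "p j"])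
  also have "\<dots> = A $$ (i, p j)" using permutes_less_iff[OF p] j by simp
  finally show "(A * perm_mat n p) $$ (i, j) = mat m n (\<lambda>(i, j). A $$ (i, p j)) $$ (i, j)"
    using i j by simp
qed (use A in \<open>auto simp: perm_mat_def\<close>)

lemma conj_act_eq:
  assumes p: "p permutes {..<n}" and A: "A \<in> carrier_mat n n"
  shows "conj_act n p A = mat n n (\<lambda>(i, j). A $$ (inv p i, inv p j))"
proof -
  have "conj_act n p A = mat n n (\<lambda>(i, j). A $$ (inv p i, j)) * perm_mat n (inv p)"
    unfolding conj_act_def perm_mat_mult[OF p A] ..
  also have "\<dots> = mat n n (\<lambda>(i, j). mat n n (\<lambda>(i, j). A $$ (inv p i, j)) $$ (i, inv p j))"
    by (rule mult_perm_mat[OF permutes_inv[OF p]]) simp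
  also have "\<dots> = mat n n (\<lambda>(i, j). A $$ (inv p i, inv p j))"
    by (rule eq_matI) (simp_all add: permutes_less_iff[OF permutes_inv[OF p]])
  finally show ?thesis .
qed

lemma row_sum_eq_card:
  "A \<in> carrier_mat m n \<Longrightarrow> row_sum A i = card {j \<in> {..<n}. A $$ (i, j) = 1}"
  unfolding row_sum_def by (simp add: of_bool_def[symmetric] Int_def)

lemma col_sum_eq_card:
  "A \<in> carrier_mat m n \<Longrightarrow> col_sum A j = card {i \<in> {..<m}. A $$ (i, j) = 1}"
  unfolding col_sum_def by (simp add: of_bool_def[symmetric] Int_def)

lemma invertible_mat_row_inj:
  assumes A: "A \<in> carrier_mat n n" and inv: "invertible_mat (A :: 'a :: semiring_1 mat)"
    and i: "i < n" and i': "i' < n" and rows: "\<And>j. j < n \<Longrightarrow> A $$ (i, j) = A $$ (i', j)"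
  shows "i = i'"
proof -
  obtain B where AB: "A * B = 1\<^sub>m n" using inv A unfolding invertible_mat_def inverts_mat_def by auto
  have B: "dim_col B = n" using arg_cong[OF AB, of dim_col] by simp
  have "row A i = row A i'" using rows A i i' by (intro eq_vecI) auto
  then have "(A * B) $$ (i, i) = (A * B) $$ (i', i)" using A i i' B by simp
  then show ?thesis unfolding AB using i i' by (simp split: if_splits)
qed

lemma bit_eq_of_bool_iff: "(x :: bit) = of_bool P \<longleftrightarrow> (x = 1 \<longleftrightarrow> P)"
  by (cases x) auto

section \<open>Staircase matrices\<close>

definition staircase_rel :: "(nat \<Rightarrow> nat) \<Rightarrow> nat list \<Rightarrow> nat \<Rightarrow> nat \<Rightarrow> bool" where
  "staircase_rel psi r i j \<longleftrightarrow> (i \<notin> set r \<and> j = psi i) \<or>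
     (\<exists>a<length r. i = r ! a \<and> (\<forall>b<length r. j = psi (r ! b) \<longrightarrow> a + b < length r))"

definition staircase_mat :: "nat \<Rightarrow> (nat \<Rightarrow> nat) \<Rightarrow> nat list \<Rightarrow> bit mat" where
  "staircase_mat n psi r = mat n n (\<lambda>(i, j). of_bool (staircase_rel psi r i j))"

lemma staircase_mat_carrier [simp]: "staircase_mat n psi r \<in> carrier_mat n n"
  unfolding staircase_mat_def by simp

lemma staircase_mat_dim [simp]:
  "dim_row (staircase_mat n psi r) = n" "dim_col (staircase_mat n psi r) = n"
  unfolding staircase_mat_def by simp_all

lemma staircase_mat_entry:
  "i < n \<Longrightarrow> j < n \<Longrightarrow> staircase_mat n psi r $$ (i, j) = of_bool (staircase_rel psi r i j)"
  unfolding staircase_mat_def by simp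

lemma staircase_rel_conj:
  assumes p: "p permutes {..<n}"
  shows "staircase_rel (p \<circ> psi \<circ> inv p) (map p r) i j \<longleftrightarrow> staircase_rel psi r (inv p i) (inv p j)"
proof -
  have eq: "x = p y \<longleftrightarrow> inv p x = y" for x y by (metis permutes_inverses[OF p])
  have "i \<in> set (map p r) \<longleftrightarrow> inv p i \<in> set r"
    by (metis image_iff list.set_map permutes_inverses[OF p])
  then show ?thesis
    unfolding staircase_rel_def by (simp add: eq permutes_inverses[OF p] cong: conj_cong)
qed

lemma conj_act_staircase_mat:
  assumes p: "p permutes {..<n}"
  shows "conj_act n p (staircase_mat n psi r) = staircase_mat n (p \<circ> psi \<circ> inv p) (map p r)"
  unfolding conj_act_eq[OF p staircase_mat_carrier]
  by (rule eq_matI) (simp_all add: staircase_mat_entry permutes_less_iff[OF permutes_inv[OF p]]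
      staircase_rel_conj[OF p])

(* The rows r ! a are called heavy, all other rows light. *)
locale staircase =
  fixes n :: nat and psi :: "nat \<Rightarrow> nat" and r :: "nat list"
  assumes psi: "psi permutes {..<n}" and distinct: "distinct r" and set_r: "set r \<subseteq> {..<n}"
begin

abbreviation "k \<equiv> length r"
abbreviation "M \<equiv> staircase_mat n psi r"

lemma psi_eq_iff [simp]: "psi x = psi y \<longleftrightarrow> x = y"
  using permutes_inj[OF psi] by (auto dest: injD)

lemma nth_eq_iff [simp]: "a < k \<Longrightarrow> b < k \<Longrightarrow> r ! a = r ! b \<longleftrightarrow> a = b"
  using distinct by (simp add: nth_eq_iff_index_eq)

lemma nth_less: "a < k \<Longrightarrow> r ! a < n"
  using set_r nth_mem by blast

lemma k_le: "k \<le> n"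
  using card_mono[OF _ set_r] distinct_card[OF distinct] by simp

lemma card_nth_image: "m \<le> k \<Longrightarrow> card ((!) r ` {..<m}) = m"
  by (subst card_image) (auto simp: inj_on_def)

lemma rel_light: "i \<notin> set r \<Longrightarrow> staircase_rel psi r i j \<longleftrightarrow> j = psi i"
  unfolding staircase_rel_def by auto

lemma rel_heavy:
  "a < k \<Longrightarrow> staircase_rel psi r (r ! a) j \<longleftrightarrow> (\<forall>b<k. j = psi (r ! b) \<longrightarrow> a + b < k)"
  unfolding staircase_rel_def by auto

lemma rel_heavy_heavy: "a < k \<Longrightarrow> b < k \<Longrightarrow> staircase_rel psi r (r ! a) (psi (r ! b)) \<longleftrightarrow> a + b < k"
  by (auto simp: rel_heavy)

lemma rel_heavy_light: "a < k \<Longrightarrow> x \<notin> set r \<Longrightarrow> staircase_rel psi r (r ! a) (psi x)"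
  by (auto simp: rel_heavy)

lemma row_support_light:
  "i < n \<Longrightarrow> i \<notin> set r \<Longrightarrow> {x \<in> {..<n}. staircase_rel psi r i (psi x)} = {i}"
  by (auto simp: rel_light)

lemma row_support_heavy:
  assumes a: "a < k"
  shows "{x \<in> {..<n}. staircase_rel psi r (r ! a) (psi x)} = ({..<n} - set r) \<union> (!) r ` {..<k - a}"
proof (intro equalityI subsetI)
  fix x assume x: "x \<in> {x \<in> {..<n}. staircase_rel psi r (r ! a) (psi x)}"
  show "x \<in> ({..<n} - set r) \<union> (!) r ` {..<k - a}"
  proof (cases "x \<in> set r")
    case True
    then obtain b where "b < k" "x = r ! b" by (auto simp: in_set_conv_nth)
    then show ?thesis using x a rel_heavy_heavy by auto
  qed (use x in auto)
qed (use a nth_less rel_heavy_light rel_heavy_heavy in auto)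

lemma col_support_light:
  assumes x: "x < n" "x \<notin> set r"
  shows "{i \<in> {..<n}. staircase_rel psi r i (psi x)} = insert x (set r)"
proof (intro equalityI subsetI)
  fix i assume "i \<in> {i \<in> {..<n}. staircase_rel psi r i (psi x)}"
  then show "i \<in> insert x (set r)" by (cases "i \<in> set r") (auto simp: rel_light)
next
  fix i assume "i \<in> insert x (set r)"
  then show "i \<in> {i \<in> {..<n}. staircase_rel psi r i (psi x)}"
    using x nth_less rel_heavy_light by (auto simp: rel_light in_set_conv_nth)
qed

lemma col_support_heavy:
  assumes b: "b < k"
  shows "{i \<in> {..<n}. staircase_rel psi r i (psi (r ! b))} = (!) r ` {..<k - b}"
proof (intro equalityI subsetI)
  fix i assume i: "i \<in> {i \<in> {..<n}. staircase_rel psi r i (psi (r ! b))}"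
  show "i \<in> (!) r ` {..<k - b}"
  proof (cases "i \<in> set r")
    case True
    then obtain a where "a < k" "i = r ! a" by (auto simp: in_set_conv_nth)
    then show ?thesis using i b rel_heavy_heavy by auto
  next
    case False
    then show ?thesis using i b by (auto simp: rel_light)
  qed
qed (use b nth_less rel_heavy_heavy in auto)

lemma bij_betw_psi_Collect: "bij_betw psi {x \<in> {..<n}. P (psi x)} {j \<in> {..<n}. P j}"
  using permutes_imp_bij[OF psi] by (rule bij_betw_Collect) simp

lemma card_Collect_psi: "card {j \<in> {..<n}. P j} = card {x \<in> {..<n}. P (psi x)}"
  using bij_betw_psi_Collect by (rule bij_betw_same_card[symmetric])

lemma row_sum_staircase:
  assumes i: "i < n"
  shows "row_sum M i = card {x \<in> {..<n}. staircase_rel psi r i (psi x)}"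
proof -
  have "row_sum M i = card {j \<in> {..<n}. staircase_rel psi r i j}"
    unfolding row_sum_eq_card[OF staircase_mat_carrier]
    by (rule arg_cong[where f = card]) (auto simp: staircase_mat_entry i)
  also have "\<dots> = card {x \<in> {..<n}. staircase_rel psi r i (psi x)}"
    by (rule card_Collect_psi)
  finally show ?thesis .
qed

lemma col_sum_staircase:
  assumes x: "x < n"
  shows "col_sum M (psi x) = card {i \<in> {..<n}. staircase_rel psi r i (psi x)}"
  unfolding col_sum_eq_card[OF staircase_mat_carrier]
  by (rule arg_cong[where f = card]) (auto simp: staircase_mat_entry x permutes_less_iff[OF psi])

lemma row_sum_light:
  assumes "i < n" "i \<notin> set r"
  shows "row_sum M i = 1"
  unfolding row_sum_staircase[OF assms(1)] row_support_light[OF assms] by simp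

lemma row_sum_heavy:
  assumes a: "a < k"
  shows "row_sum M (r ! a) = n - a"
proof -
  have "(!) r ` {..<k - a} \<subseteq> set r" by auto
  then have "card (({..<n} - set r) \<union> (!) r ` {..<k - a}) = (n - k) + (k - a)"
    using set_r k_le by (subst card_Un_disjoint)
      (auto simp: card_Diff_subset distinct_card[OF distinct] card_nth_image)
  also have "\<dots> = n - a" using a k_le by simp
  finally show ?thesis unfolding row_sum_staircase[OF nth_less[OF a]] row_support_heavy[OF a] .
qed

lemma col_sum_light:
  assumes "x < n" "x \<notin> set r"
  shows "col_sum M (psi x) = k + 1"
  unfolding col_sum_staircase[OF assms(1)] col_support_light[OF assms] using assms(2)
  by (simp add: distinct_card[OF distinct])

lemma col_sum_heavy:
  assumes "b < k"
  shows "col_sum M (psi (r ! b)) = k - b"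
  unfolding col_sum_staircase[OF nth_less[OF assms]] col_support_heavy[OF assms]
  by (simp add: card_nth_image)

lemma image_mset_split:
  assumes "\<And>a. a < k \<Longrightarrow> f (r ! a) = g a" and "\<And>i. i < n \<Longrightarrow> i \<notin> set r \<Longrightarrow> f i = c"
  shows "image_mset f (mset_set {..<n}) = mset (map g [0..<k]) + replicate_mset (n - k) c"
proof -
  let ?L = "{..<n} - set r"
  have "{..<n} = set r \<union> ?L" using set_r by auto
  then have "mset_set {..<n} = mset_set (set r) + mset_set ?L"
    by (metis Diff_disjoint finite_Diff finite_lessThan List.finite_set mset_set_Union)
  then have "image_mset f (mset_set {..<n}) = image_mset f (mset r) + image_mset f (mset_set ?L)"
    by (simp add: mset_set_set[OF distinct])
  also have "image_mset f (mset r) = mset (map g [0..<k])"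
  proof -
    have "map f r = map g [0..<k]" by (rule nth_equalityI) (simp_all add: assms(1))
    then show ?thesis by (metis mset_map)
  qed
  also have "image_mset f (mset_set ?L) = image_mset (\<lambda>_. c) (mset_set ?L)"
    by (rule image_mset_cong) (use assms(2) in auto)
  also have "\<dots> = replicate_mset (n - k) c"
    using set_r by (simp add: image_mset_const_eq card_Diff_subset distinct_card[OF distinct])
  finally show ?thesis .
qed

lemma eta_staircase: "eta M = map (\<lambda>i. n - i) [0..<k] @ replicate (n - k) 1"
  unfolding eta_def staircase_mat_dim
proof (rule rev_sort_eq)
  have "mset (map (row_sum M) [0..<n]) = mset (map (\<lambda>i. n - i) [0..<k]) + replicate_mset (n - k) 1"
    unfolding mset_map_upt[of "row_sum M"] by (rule image_mset_split) (simp_all add: row_sum_heavy row_sum_light)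
  then show "mset (map (row_sum M) [0..<n]) = mset (map (\<lambda>i. n - i) [0..<k] @ replicate (n - k) 1)"
    by simp
  show "sorted (rev (map (\<lambda>i. n - i) [0..<k] @ replicate (n - k) 1))"
    unfolding sorted_rev_iff_nth_mono using k_le by (auto simp: nth_append)
qed

lemma theta_staircase: "theta M = replicate (n - k) (k + 1) @ map (\<lambda>i. k - i) [0..<k]"
  unfolding theta_def staircase_mat_dim
proof (rule rev_sort_eq)
  have "mset (map (col_sum M) [0..<n]) = image_mset (col_sum M) (image_mset psi (mset_set {..<n}))"
    unfolding mset_map_upt[of "col_sum M"] permutes_image_mset[OF psi] ..
  also have "\<dots> = image_mset (col_sum M \<circ> psi) (mset_set {..<n})"
    by (rule multiset.map_comp)
  also have "\<dots> = mset (map (\<lambda>i. k - i) [0..<k]) + replicate_mset (n - k) (k + 1)"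
    by (rule image_mset_split) (simp_all add: col_sum_heavy col_sum_light)
  finally show "mset (map (col_sum M) [0..<n]) = mset (replicate (n - k) (k + 1) @ map (\<lambda>i. k - i) [0..<k])"
    by (simp add: add.commute)
  show "sorted (rev (replicate (n - k) (k + 1) @ map (\<lambda>i. k - i) [0..<k]))"
    unfolding sorted_rev_iff_nth_mono by (auto simp: nth_append)
qed

lemma staircase_mult_vec:
  assumes v: "v \<in> carrier_vec n" and i: "i < n"
  shows "(M *\<^sub>v v) $ i = (\<Sum>x\<in>{x \<in> {..<n}. staircase_rel psi r i (psi x)}. v $ psi x)"
proof -
  have "(M *\<^sub>v v) $ i = (\<Sum>j\<in>{0..<n}. of_bool (staircase_rel psi r i j) * v $ j)"
    using v i by (simp add: mult_mat_vec_def scalar_prod_def staircase_mat_entry)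
  also have "\<dots> = (\<Sum>j\<in>{j \<in> {..<n}. staircase_rel psi r i j}. v $ j)"
    by (simp add: atLeast0LessThan Int_def)
  also have "\<dots> = (\<Sum>x\<in>{x \<in> {..<n}. staircase_rel psi r i (psi x)}. v $ psi x)"
    using bij_betw_psi_Collect by (rule sum.reindex_bij_betw[symmetric])
  finally show ?thesis .
qed

lemma staircase_mult_vec_eq_0:
  assumes v: "v \<in> carrier_vec n" and Mv: "M *\<^sub>v v = 0\<^sub>v n"
  shows "v = 0\<^sub>v n"
proof -
  let ?u = "\<lambda>x. v $ psi x"
  have row_zero: "(\<Sum>x\<in>{x \<in> {..<n}. staircase_rel psi r i (psi x)}. ?u x) = 0" if "i < n" for i
    using staircase_mult_vec[OF v that] Mv that by simp
  have light: "?u x = 0" if "x < n" "x \<notin> set r" for x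
    using row_zero[OF that(1)] unfolding row_support_light[OF that] by simp
  \<comment> \<open>Given \<open>light\<close>, row \<open>r ! (k - m)\<close> says that the first \<open>m\<close> values \<open>?u (r ! b)\<close> sum to zero.\<close>
  have prefix: "(\<Sum>b<m. ?u (r ! b)) = 0" if m: "m \<le> k" for m
  proof (cases "m = 0")
    case False
    then have a: "k - m < k" and km: "k - (k - m) = m" using m by auto
    have "(\<Sum>x\<in>({..<n} - set r) \<union> (!) r ` {..<m}. ?u x) = 0"
      using row_zero[OF nth_less[OF a]] unfolding row_support_heavy[OF a] km .
    moreover have "({..<n} - set r) \<inter> (!) r ` {..<m} = {}" using m by auto
    moreover have "(\<Sum>x\<in>{..<n} - set r. ?u x) = 0" using light by simp
    moreover have "(\<Sum>x\<in>(!) r ` {..<m}. ?u x) = (\<Sum>b<m. ?u (r ! b))"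
      using m by (subst sum.reindex) (auto simp: inj_on_def)
    ultimately show ?thesis by (simp add: sum.union_disjoint)
  qed simp
  have u0: "?u x = 0" if "x < n" for x
  proof (cases "x \<in> set r")
    case True
    then obtain b where b: "b < k" "x = r ! b" by (auto simp: in_set_conv_nth)
    show ?thesis unfolding b(2) by (rule prefix_sums_zero[where w = "\<lambda>b. ?u (r ! b)", OF prefix b(1)])
  qed (use light that in simp)
  show "v = 0\<^sub>v n"
  proof (rule eq_vecI)
    fix j assume "j < dim_vec (0\<^sub>v n :: bit vec)"
    then have j: "j < n" by simp
    have "v $ j = ?u (inv psi j)" by (simp add: permutes_inverses[OF psi])
    also have "\<dots> = 0" using u0 j permutes_less_iff[OF permutes_inv[OF psi]] by simp
    finally show "v $ j = 0\<^sub>v n $ j" using j by simp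
  qed (use v in simp)
qed

lemma det_staircase_mat: "det M \<noteq> 0"
proof
  assume "det M = 0"
  then obtain v where "v \<in> carrier_vec n" "v \<noteq> 0\<^sub>v n" "M *\<^sub>v v = 0\<^sub>v n"
    using det_0_iff_vec_prod_zero[OF staircase_mat_carrier] by blast
  then show False using staircase_mult_vec_eq_0 by blast
qed

lemma invertible_staircase_mat: "invertible_mat M"
proof -
  have "M \<in> Units (ring_mat TYPE(bit) n ())"
    by (rule det_non_zero_imp_unit[OF staircase_mat_carrier det_staircase_mat])
  then show ?thesis
    unfolding Units_def ring_mat_simps invertible_mat_def inverts_mat_def by auto
qed

lemma staircase_mat_in_H: "M \<in> H n k"
  unfolding H_def GL2_def using invertible_staircase_mat eta_staircase theta_staircase by simp

lemma row_sum_eq_iff: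
  assumes a: "a < k" and i: "i < n"
  shows "row_sum M i = n - a \<longleftrightarrow> i = r ! a"
proof (cases "i \<in> set r")
  case True
  then obtain a' where a': "a' < k" "i = r ! a'" by (auto simp: in_set_conv_nth)
  then show ?thesis using a k_le row_sum_heavy by auto
next
  case False
  then have "set r \<subset> {..<n}" using set_r i by auto
  then have "card (set r) < card {..<n}" by (rule psubset_card_mono[rotated]) simp
  then have "k < n" using distinct_card[OF distinct] by simp
  then show ?thesis using False i a row_sum_light by auto
qed

lemma col_sum_eq_iff:
  assumes b: "b < k" and j: "j < n"
  shows "col_sum M j = k - b \<longleftrightarrow> j = psi (r ! b)"
proof -
  define x where "x = inv psi j"
  have x: "x < n" "j = psi x"
    unfolding x_def using j permutes_less_iff[OF permutes_inv[OF psi]] permutes_inverses[OF psi] by auto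
  show ?thesis
  proof (cases "x \<in> set r")
    case True
    then obtain b' where "b' < k" "x = r ! b'" by (auto simp: in_set_conv_nth)
    then show ?thesis using b x col_sum_heavy by auto
  next
    case False
    then have "x \<noteq> r ! b" using b by auto
    then show ?thesis using b x False col_sum_light by auto
  qed
qed

lemma light_row_entry:
  "i < n \<Longrightarrow> i \<notin> set r \<Longrightarrow> j < n \<Longrightarrow> M $$ (i, j) = 1 \<longleftrightarrow> j = psi i"
  by (simp add: staircase_mat_entry rel_light)

end

lemma staircase_conj:
  assumes p: "p permutes {..<n}" and "staircase n psi r"
  shows "staircase n (p \<circ> psi \<circ> inv p) (map p r)"
proof -
  interpret staircase n psi r by fact
  show ?thesis
    using conj_permutes[OF p psi] distinct set_r permutes_inj[OF p] permutes_less_iff[OF p]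
    by unfold_locales (auto simp: distinct_map inj_on_def dest: injD)
qed

lemma staircase_mat_inj:
  assumes S: "staircase n psi r" and S': "staircase n psi' r'" and len: "length r = length r'"
    and eq: "staircase_mat n psi r = staircase_mat n psi' r'"
  shows "psi = psi' \<and> r = r'"
proof -
  interpret S: staircase n psi r by (rule S)
  interpret S': staircase n psi' r' by (rule S')
  have r: "r = r'"
  proof (rule nth_equalityI)
    fix a assume a: "a < length r"
    have "row_sum (staircase_mat n psi' r') (r ! a) = n - a"
      using S.row_sum_heavy[OF a] eq by simp
    then show "r ! a = r' ! a" using S'.row_sum_eq_iff a len S.nth_less[OF a] by simp
  qed (rule len)
  have "psi x = psi' x" for x
  proof (cases "x < n")
    case False
    then show ?thesis using S.psi S'.psi by (simp add: permutes_not_in)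
  next
    case x: True
    have psi_x: "psi x < n" using x permutes_less_iff[OF S.psi] by simp
    show ?thesis
    proof (cases "x \<in> set r")
      case True
      then obtain b where b: "b < length r" "x = r ! b" by (auto simp: in_set_conv_nth)
      have "col_sum (staircase_mat n psi' r') (psi x) = length r' - b"
        using S.col_sum_heavy[OF b(1)] b(2) eq len by simp
      then show ?thesis using S'.col_sum_eq_iff b len r psi_x by simp
    next
      case False
      have "staircase_mat n psi' r' $$ (x, psi x) = 1"
        using S.light_row_entry[OF x False psi_x] eq by simp
      then show ?thesis using S'.light_row_entry[OF x _ psi_x] False r by simp
    qed
  qed
  with r show ?thesis by auto
qed

section \<open>Every matrix of H n k is a staircase matrix\<close>

locale H_matrix =
  fixes n k :: nat and A :: "bit mat"
  assumes k_le: "k \<le> n" and A: "A \<in> carrier_mat n n" and invertible: "invertible_mat A"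
    and eta: "eta A = map (\<lambda>i. n - i) [0..<k] @ replicate (n - k) 1"
    and theta: "theta A = replicate (n - k) (k + 1) @ map (\<lambda>i. k - i) [0..<k]"
begin

lemma dim_A [simp]: "dim_row A = n" "dim_col A = n"
  using A by auto

lemma mset_row_sums: "mset (map (row_sum A) [0..<n]) = mset (map (\<lambda>i. n - i) [0..<k] @ replicate (n - k) 1)"
  using arg_cong[OF eta, of mset] unfolding eta_def by simp

lemma mset_col_sums: "mset (map (col_sum A) [0..<n]) = mset (replicate (n - k) (k + 1) @ map (\<lambda>i. k - i) [0..<k])"
  using arg_cong[OF theta, of mset] unfolding theta_def by simp

lemma card_heavy_row_sums: "a < k \<Longrightarrow> card {i \<in> {..<n}. row_sum A i = n - a} = 1"
proof -
  assume a: "a < k"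
  have "distinct (map (\<lambda>i. n - i) [0..<k])" using k_le by (auto simp: distinct_map inj_on_def)
  then have "count (mset (map (\<lambda>i. n - i) [0..<k])) (n - a) = 1"
    using a by (auto simp: distinct_count_atmost_1)
  moreover have "n - a \<noteq> 1 \<or> n - k = 0" using a k_le by auto
  ultimately show ?thesis unfolding card_eq_count_mset_map mset_row_sums by auto
qed

lemma card_heavy_col_sums: "b < k \<Longrightarrow> card {j \<in> {..<n}. col_sum A j = k - b} = 1"
proof -
  assume b: "b < k"
  have "distinct (map (\<lambda>i. k - i) [0..<k])" by (auto simp: distinct_map inj_on_def)
  then have "count (mset (map (\<lambda>i. k - i) [0..<k])) (k - b) = 1"
    using b by (auto simp: distinct_count_atmost_1)
  then show ?thesis unfolding card_eq_count_mset_map mset_col_sums by auto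
qed

lemma row_sum_cases:
  assumes "i < n"
  shows "(\<exists>a<k. row_sum A i = n - a) \<or> row_sum A i = 1"
proof -
  have "row_sum A i \<in> set (map (row_sum A) [0..<n])" using assms by simp
  then show ?thesis unfolding mset_eq_setD[OF mset_row_sums] by (auto split: if_splits)
qed

lemma col_sum_cases:
  assumes "j < n"
  shows "(\<exists>b<k. col_sum A j = k - b) \<or> col_sum A j = k + 1"
proof -
  have "col_sum A j \<in> set (map (col_sum A) [0..<n])" using assms by simp
  then show ?thesis unfolding mset_eq_setD[OF mset_col_sums] by (auto split: if_splits)
qed

definition heavy_row :: "nat \<Rightarrow> nat" where
  "heavy_row a = the_elem {i \<in> {..<n}. row_sum A i = n - a}"

definition heavy_col :: "nat \<Rightarrow> nat" where
  "heavy_col b = the_elem {j \<in> {..<n}. col_sum A j = k - b}"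

lemma heavy_row:
  assumes "a < k"
  shows "heavy_row a < n" "row_sum A (heavy_row a) = n - a"
    "\<And>i. i < n \<Longrightarrow> row_sum A i = n - a \<Longrightarrow> i = heavy_row a"
  using singleton_the_elem_if_card_eq_1[OF card_heavy_row_sums[OF assms]]
  unfolding heavy_row_def[symmetric] by blast+

lemma heavy_col:
  assumes "b < k"
  shows "heavy_col b < n" "col_sum A (heavy_col b) = k - b"
    "\<And>j. j < n \<Longrightarrow> col_sum A j = k - b \<Longrightarrow> j = heavy_col b"
  using singleton_the_elem_if_card_eq_1[OF card_heavy_col_sums[OF assms]]
  unfolding heavy_col_def[symmetric] by blast+

lemma heavy_row_inj: "a < k \<Longrightarrow> a' < k \<Longrightarrow> heavy_row a = heavy_row a' \<longleftrightarrow> a = a'"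
  using heavy_row(2)[of a] heavy_row(2)[of a'] k_le by fastforce

lemma heavy_col_inj: "b < k \<Longrightarrow> b' < k \<Longrightarrow> heavy_col b = heavy_col b' \<longleftrightarrow> b = b'"
  using heavy_col(2)[of b] heavy_col(2)[of b'] by fastforce

definition heavy_rows :: "nat list" where
  "heavy_rows = map heavy_row [0..<k]"

lemma heavy_rows_length [simp]: "length heavy_rows = k"
  unfolding heavy_rows_def by simp

lemma heavy_rows_nth [simp]: "a < k \<Longrightarrow> heavy_rows ! a = heavy_row a"
  unfolding heavy_rows_def by simp

lemma set_heavy_rows: "set heavy_rows = heavy_row ` {..<k}"
  unfolding heavy_rows_def by auto

lemma distinct_heavy_rows: "distinct heavy_rows"
  unfolding heavy_rows_def distinct_map using heavy_row_inj by (auto simp: inj_on_def)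

definition light_rows :: "nat set" where
  "light_rows = {..<n} - set heavy_rows"

definition light_cols :: "nat set" where
  "light_cols = {..<n} - heavy_col ` {..<k}"

lemma card_light_rows: "card light_rows = n - k"
  unfolding light_rows_def set_heavy_rows using heavy_row(1) heavy_row_inj
  by (subst card_Diff_subset) (auto simp: card_image inj_on_def)

lemma card_light_cols: "card light_cols = n - k"
  unfolding light_cols_def using heavy_col(1) heavy_col_inj
  by (subst card_Diff_subset) (auto simp: card_image inj_on_def)

lemma row_sum_light_row: "i \<in> light_rows \<Longrightarrow> row_sum A i = 1"
  using row_sum_cases heavy_row(3) unfolding light_rows_def set_heavy_rows by blast

lemma col_sum_light_col: "j \<in> light_cols \<Longrightarrow> col_sum A j = k + 1"
  using col_sum_cases heavy_col(3) unfolding light_cols_def by blast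

lemma card_ones_light_row: "i \<in> light_rows \<Longrightarrow> card {j \<in> {..<n}. A $$ (i, j) = 1} = 1"
  using row_sum_light_row row_sum_eq_card[OF A] by simp

definition light_col :: "nat \<Rightarrow> nat" where
  "light_col i = the_elem {j \<in> {..<n}. A $$ (i, j) = 1}"

lemma light_col:
  assumes "i \<in> light_rows"
  shows "light_col i < n" "\<And>j. j < n \<Longrightarrow> A $$ (i, j) = 1 \<longleftrightarrow> j = light_col i"
  using singleton_the_elem_if_card_eq_1[OF card_ones_light_row[OF assms]]
  unfolding light_col_def[symmetric] by blast+

lemma inj_on_light_col: "inj_on light_col light_rows"
proof (rule inj_onI)
  fix i i' assume i: "i \<in> light_rows" and i': "i' \<in> light_rows" and eq: "light_col i = light_col i'"
  have "A $$ (i, j) = A $$ (i', j)" if "j < n" for j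
    using light_col(2)[OF i that] light_col(2)[OF i' that] eq by (cases "A $$ (i, j)") auto
  moreover have "i < n" "i' < n" using i i' unfolding light_rows_def by auto
  ultimately show "i = i'" using invertible_mat_row_inj[OF A invertible] by blast
qed

lemma col_sum_split:
  assumes j: "j < n"
  shows "col_sum A j = card {i \<in> set heavy_rows. A $$ (i, j) = 1} + card {i \<in> light_rows. light_col i = j}"
proof -
  have "{i \<in> {..<n}. A $$ (i, j) = 1} = {i \<in> set heavy_rows. A $$ (i, j) = 1} \<union> {i \<in> light_rows. light_col i = j}"
    using light_col(2)[OF _ j] heavy_row(1) unfolding light_rows_def set_heavy_rows by auto
  moreover have "set heavy_rows \<inter> light_rows = {}" unfolding light_rows_def by auto
  ultimately show ?thesis
    unfolding col_sum_eq_card[OF A] by (subst card_Un_disjoint[symmetric]) (auto simp: light_rows_def)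
qed

lemma card_light_col_fibre: "card {i \<in> light_rows. light_col i = j} = (if j \<in> light_col ` light_rows then 1 else 0)"
proof (cases "j \<in> light_col ` light_rows")
  case True
  then obtain i where "i \<in> light_rows" "j = light_col i" by blast
  then have "{i' \<in> light_rows. light_col i' = j} = {i}" using inj_on_light_col by (auto simp: inj_on_def)
  then show ?thesis using True by simp
next
  case False
  then have "{i \<in> light_rows. light_col i = j} = {}" by blast
  then show ?thesis using False by (simp only: card.empty if_False)
qed

lemma light_cols_eq: "light_cols = light_col ` light_rows"
proof -
  have "light_cols \<subseteq> light_col ` light_rows"
  proof
    fix j assume j: "j \<in> light_cols"
    then have "j < n" unfolding light_cols_def by auto
    have "card {i \<in> set heavy_rows. A $$ (i, j) = 1} \<le> k"
      using card_mono[of "set heavy_rows"] distinct_card[OF distinct_heavy_rows] by fastforce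
    then have "card {i \<in> light_rows. light_col i = j} \<noteq> 0"
      using col_sum_split[OF \<open>j < n\<close>] col_sum_light_col[OF j] by linarith
    then show "j \<in> light_col ` light_rows" using card_light_col_fibre[of j] by (simp split: if_splits)
  qed
  moreover have "card light_cols = card (light_col ` light_rows)"
    using inj_on_light_col card_light_rows card_light_cols by (simp add: card_image)
  ultimately show ?thesis by (intro card_subset_eq) (simp_all add: light_rows_def)
qed

lemma heavy_row_light_col_entry:
  assumes j: "j \<in> light_cols" and i: "i \<in> set heavy_rows"
  shows "A $$ (i, j) = 1"
proof -
  have "j < n" using j unfolding light_cols_def by auto
  then have "card {i \<in> set heavy_rows. A $$ (i, j) = 1} = card (set heavy_rows)"
    using col_sum_split col_sum_light_col[OF j] card_light_col_fibre[of j] light_cols_eq j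
      distinct_card[OF distinct_heavy_rows] by simp
  then have "{i \<in> set heavy_rows. A $$ (i, j) = 1} = set heavy_rows" by (intro card_subset_eq) auto
  then show ?thesis using i by blast
qed

lemma card_heavy_col_entries:
  assumes b: "b < k"
  shows "card {a. a < k \<and> A $$ (heavy_row a, heavy_col b) = 1} = k - b"
proof -
  have "heavy_col b \<notin> light_col ` light_rows"
    unfolding light_cols_eq[symmetric] light_cols_def using b by auto
  then have "card {i \<in> set heavy_rows. A $$ (i, heavy_col b) = 1} = k - b"
    using col_sum_split[OF heavy_col(1)[OF b]] heavy_col(2)[OF b] card_light_col_fibre by simp
  moreover have "{i \<in> set heavy_rows. A $$ (i, heavy_col b) = 1}
      = heavy_row ` {a. a < k \<and> A $$ (heavy_row a, heavy_col b) = 1}"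
    unfolding set_heavy_rows by auto
  moreover have "inj_on heavy_row {a. a < k \<and> A $$ (heavy_row a, heavy_col b) = 1}"
    using heavy_row_inj by (auto simp: inj_on_def)
  ultimately show ?thesis by (simp add: card_image)
qed

lemma card_heavy_row_entries:
  assumes a: "a < k"
  shows "card {b. b < k \<and> A $$ (heavy_row a, heavy_col b) = 1} = k - a"
proof -
  let ?B = "heavy_col ` {b. b < k \<and> A $$ (heavy_row a, heavy_col b) = 1}"
  have "{j \<in> {..<n}. A $$ (heavy_row a, j) = 1} = light_cols \<union> ?B"
    using heavy_row_light_col_entry[of _ "heavy_row a"] heavy_col(1) a
    unfolding light_cols_def set_heavy_rows by auto
  moreover have "light_cols \<inter> ?B = {}" unfolding light_cols_def by auto
  moreover have "card ?B = card {b. b < k \<and> A $$ (heavy_row a, heavy_col b) = 1}"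
    using heavy_col_inj by (intro card_image) (auto simp: inj_on_def)
  ultimately have "row_sum A (heavy_row a) = (n - k) + card {b. b < k \<and> A $$ (heavy_row a, heavy_col b) = 1}"
    unfolding row_sum_eq_card[OF A] card_light_cols[symmetric]
    by (simp add: card_Un_disjoint light_cols_def)
  then show ?thesis using heavy_row(2)[OF a] a k_le by simp
qed

lemma heavy_entry_iff: "a < k \<Longrightarrow> b < k \<Longrightarrow> A $$ (heavy_row a, heavy_col b) = 1 \<longleftrightarrow> a + b < k"
  by (rule staircase_pattern_unique[where B = "\<lambda>a b. A $$ (heavy_row a, heavy_col b) = 1"])
    (simp_all add: card_heavy_row_entries card_heavy_col_entries)

definition col_perm :: "nat \<Rightarrow> nat" where
  "col_perm i = (if i \<in> light_rows then light_col i
     else if i \<in> set heavy_rows then heavy_col (the_inv_into {..<k} heavy_row i) else i)"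

lemma inj_on_heavy_row: "inj_on heavy_row {..<k}"
  using heavy_row_inj by (auto simp: inj_on_def)

lemma col_perm_heavy_row: "a < k \<Longrightarrow> col_perm (heavy_row a) = heavy_col a"
  unfolding col_perm_def light_rows_def set_heavy_rows
  by (simp add: the_inv_into_f_f[OF inj_on_heavy_row])

lemma col_perm_light_row: "i \<in> light_rows \<Longrightarrow> col_perm i = light_col i"
  unfolding col_perm_def by simp

lemma col_perm_permutes: "col_perm permutes {..<n}"
proof (rule bij_imp_permutes)
  have "bij_betw col_perm light_rows light_cols"
    unfolding light_cols_eq using inj_on_light_col
    by (simp add: bij_betw_def col_perm_light_row cong: inj_on_cong image_cong)
  moreover have "bij_betw col_perm (set heavy_rows) (heavy_col ` {..<k})"
  proof -
    have "col_perm ` set heavy_rows = heavy_col ` {..<k}"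
      unfolding set_heavy_rows image_image by (rule image_cong) (simp_all add: col_perm_heavy_row)
    moreover have "inj_on col_perm (set heavy_rows)"
      unfolding set_heavy_rows using heavy_row_inj heavy_col_inj
      by (auto simp: inj_on_def col_perm_heavy_row)
    ultimately show ?thesis by (simp add: bij_betw_def)
  qed
  moreover have "light_cols \<inter> heavy_col ` {..<k} = {}" unfolding light_cols_def by auto
  ultimately have "bij_betw col_perm (light_rows \<union> set heavy_rows) (light_cols \<union> heavy_col ` {..<k})"
    by (rule bij_betw_combine)
  moreover have "light_rows \<union> set heavy_rows = {..<n}"
    unfolding light_rows_def set_heavy_rows using heavy_row(1) by auto
  moreover have "light_cols \<union> heavy_col ` {..<k} = {..<n}"
    unfolding light_cols_def using heavy_col(1) by auto
  ultimately show "bij_betw col_perm {..<n} {..<n}" by simp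
next
  fix x assume "x \<notin> {..<n}"
  then show "col_perm x = x"
    unfolding col_perm_def light_rows_def set_heavy_rows using heavy_row(1) by auto
qed

lemma staircase_col_perm: "staircase n col_perm heavy_rows"
  using col_perm_permutes distinct_heavy_rows heavy_row(1)
  by unfold_locales (auto simp: set_heavy_rows)

lemma A_eq_staircase_mat: "A = staircase_mat n col_perm heavy_rows"
proof (rule eq_matI)
  interpret S: staircase n col_perm heavy_rows by (rule staircase_col_perm)
  fix i j assume "i < dim_row (staircase_mat n col_perm heavy_rows)" "j < dim_col (staircase_mat n col_perm heavy_rows)"
  then have i: "i < n" and j: "j < n" by auto
  have "A $$ (i, j) = 1 \<longleftrightarrow> staircase_rel col_perm heavy_rows i j"
  proof (cases "i \<in> set heavy_rows")
    case False
    then have "i \<in> light_rows" using i unfolding light_rows_def by auto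
    then show ?thesis using False light_col(2)[OF _ j] by (simp add: S.rel_light col_perm_light_row)
  next
    case True
    then obtain a where a: "a < k" and ia: "i = heavy_rows ! a" unfolding set_heavy_rows by auto
    have rel: "staircase_rel col_perm heavy_rows i j \<longleftrightarrow> (\<forall>b<k. j = heavy_col b \<longrightarrow> a + b < k)"
      unfolding ia using S.rel_heavy[of a j] a by (simp add: col_perm_heavy_row)
    show ?thesis
    proof (cases "j \<in> light_cols")
      case True
      then show ?thesis
        using rel heavy_row_light_col_entry[OF True \<open>i \<in> set heavy_rows\<close>]
        unfolding light_cols_def by auto
    next
      case False
      then obtain b where b: "b < k" and jb: "j = heavy_col b" using j unfolding light_cols_def by auto
      then show ?thesis using rel heavy_entry_iff[OF a b] heavy_col_inj a ia by auto
    qed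
  qed
  then show "A $$ (i, j) = staircase_mat n col_perm heavy_rows $$ (i, j)"
    using i j by (simp add: staircase_mat_entry bit_eq_of_bool_iff)
qed auto

end

definition staircase_params :: "nat \<Rightarrow> nat \<Rightarrow> ((nat \<Rightarrow> nat) \<times> nat list) set" where
  "staircase_params n k = {(psi, r). staircase n psi r \<and> length r = k}"

theorem H_eq_image_staircase_mat:
  assumes "k \<le> n"
  shows "H n k = (\<lambda>(psi, r). staircase_mat n psi r) ` staircase_params n k"
proof (intro equalityI subsetI)
  fix A assume "A \<in> H n k"
  then interpret H_matrix n k A using assms by unfold_locales (auto simp: H_def GL2_def)
  show "A \<in> (\<lambda>(psi, r). staircase_mat n psi r) ` staircase_params n k"
    unfolding staircase_params_def using A_eq_staircase_mat staircase_col_perm by force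
next
  fix A assume "A \<in> (\<lambda>(psi, r). staircase_mat n psi r) ` staircase_params n k"
  then obtain psi r where "staircase n psi r" "length r = k" "A = staircase_mat n psi r"
    unfolding staircase_params_def by auto
  then show "A \<in> H n k" using staircase.staircase_mat_in_H by blast
qed

lemma inj_on_staircase_mat: "inj_on (\<lambda>(psi, r). staircase_mat n psi r) (staircase_params n k)"
  unfolding staircase_params_def using staircase_mat_inj by (auto simp: inj_on_def)

section \<open>Fixed points of the conjugation action and the multiplicity\<close>

theorem card_fixed_points_H:
  assumes p: "p permutes {..<n}" and k: "k \<le> n"
  shows "card {A \<in> H n k. conj_act n p A = A} = card (centraliser n p) * falling (card (fixed_points n p)) k"
proof -
  let ?act = "\<lambda>(psi, r). (p \<circ> psi \<circ> inv p, map p r)"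
  have "card {A \<in> H n k. conj_act n p A = A} = card {x \<in> staircase_params n k. ?act x = x}"
  proof (rule card_fixed_points_eq_if_equivariant[OF inj_on_staircase_mat H_eq_image_staircase_mat[OF k, symmetric]])
    show "?act x \<in> staircase_params n k" if "x \<in> staircase_params n k" for x
      using that staircase_conj[OF p] unfolding staircase_params_def by auto
    show "conj_act n p ((\<lambda>(psi, r). staircase_mat n psi r) x) = (\<lambda>(psi, r). staircase_mat n psi r) (?act x)" for x
      by (cases x) (simp add: conj_act_staircase_mat[OF p])
  qed
  also have "{x \<in> staircase_params n k. ?act x = x}
      = centraliser n p \<times> {r. length r = k \<and> distinct r \<and> set r \<subseteq> fixed_points n p}"
    using conj_eq_self_iff[OF p] map_eq_conv[of p _ "\<lambda>x. x"]
    by (auto simp: staircase_params_def staircase_def centraliser_def fixed_points_def)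
  also have "card \<dots> = card (centraliser n p) * falling (card (fixed_points n p)) k"
    by (simp add: card_cartesian_product card_distinct_lists_falling fixed_points_def)
  finally show ?thesis .
qed

theorem mainTheorem6:
  fixes n k :: nat and lam :: "nat list"
  assumes "k \<le> n" and "is_partition lam n"
  shows "multiplicity n lam (perm_char n (H n k)) =
         (\<Sum>C\<in>conj_classes n. irr_char n lam (rep C) * of_nat (falling (n - supp_size C) k))"
proof -
  let ?w = "\<lambda>p. irr_char n lam p * of_nat (falling (card (fixed_points n p)) k)"
  have "class_function n ?w"
    using class_function_irr_char class_function_card_fixed_points unfolding class_function_def by simp
  have "(\<Sum>p | p permutes {..<n}. perm_char n (H n k) p * cnj (irr_char n lam p))
      = (\<Sum>p | p permutes {..<n}. of_nat (card (centraliser n p)) * ?w p)"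
    by (rule sum.cong) (simp_all add: perm_char_def card_fixed_points_H assms(1) cnj_irr_char)
  also have "\<dots> = of_nat (fact n) * (\<Sum>C\<in>conj_classes n. ?w (rep C))"
    by (rule sum_permutations_centraliser_weighted) fact
  also have "(\<Sum>C\<in>conj_classes n. ?w (rep C))
      = (\<Sum>C\<in>conj_classes n. irr_char n lam (rep C) * of_nat (falling (n - supp_size C) k))"
    by (rule sum.cong) (simp_all add: card_fixed_points_rep)
  finally show ?thesis unfolding multiplicity_def by simp
qed

end
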